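(* Let $t,\ell,m$ be integers with $1 \le t \le \ell \le m$ and $\ell m\ge 2$. Then the minimum distance of the dual code $\widehat{C}_{\det}(t;\ell,m)^{\perp}$ equals $3$.
   Context: $q$ is a prime power. Let $\widehat{\mathcal D}_t(\ell,m)\subset\mathbb{P}^{\ell m-1}(\mathbb{F}_q)=\mathbb{P}(\mathrm{Mat}_{\ell\times m}(\mathbb{F}_q))$ be the set of points $[M]$ with $M\ne 0$ and $\mathrm{rk}(M)\le t$; let $\hat n=|\widehat{\mathcal D}_t(\ell,m)|$, enumerate its points and choose representatives $M_1,\dots,M_{\hat n}$. The determinantal code $\widehat{C}_{\det}(t;\ell,m)\subseteq\mathbb{F}_q^{\hat n}$ is the set of vectors $(f(M_1),\dots,f(M_{\hat n}))$ for $f$ ranging over linear forms in the entries of an $\ell\times m$ matrix of indeterminates. The dual code is its orthogonal complement in $\mathbb{F}_q^{\hat n}$ with respect to the standard dot product. *)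

theory Defs
  imports "HOL-Analysis.Analysis"
begin

text \<open>Matrices of size l x m over a finite field 'a are elements of 'a^'m^'l
  (rows indexed by 'l, columns by 'm).  The rank is the library rank
  (Cartesian_Space) for matrices over an arbitrary field.\<close>

definition det_cone :: "nat \<Rightarrow> ('a::field ^'m^'l) set" where
  "det_cone t = {M. M \<noteq> 0 \<and> rank M \<le> t}"

text \<open>Ms is a list of representatives of the projective points of the
  determinantal variety: every entry is a nonzero matrix of rank at most t,
  and every nonzero matrix of rank at most t is a nonzero scalar multiple of
  exactly one entry of Ms (so the entries enumerate the projective points,
  each once).\<close>
definition proj_reps :: "nat \<Rightarrow> ('a::field ^'m^'l) list \<Rightarrow> bool" where
  "proj_reps t Ms \<longleftrightarrow>
     set Ms \<subseteq> det_cone t \<and>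
     (\<forall>M \<in> det_cone t. \<exists>!i. i < length Ms \<and>
         (\<exists>c. c \<noteq> 0 \<and> M = (\<chi> a b. c * (Ms ! i) $ a $ b)))"

definition lin_form :: "('a::comm_ring_1 ^'m^'l) \<Rightarrow> ('a ^'m^'l) \<Rightarrow> 'a" where
  "lin_form F M = (\<Sum>a\<in>UNIV. \<Sum>b\<in>UNIV. F $ a $ b * M $ a $ b)"

definition det_code :: "('a::comm_ring_1 ^'m^'l) list \<Rightarrow> 'a list set" where
  "det_code Ms = {map (lin_form F) Ms | F. True}"

definition dot_prod :: "'a::comm_ring_1 list \<Rightarrow> 'a list \<Rightarrow> 'a" where
  "dot_prod u v = sum_list (map2 (*) u v)"

definition dual_code :: "nat \<Rightarrow> 'a::comm_ring_1 list set \<Rightarrow> 'a list set" where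
  "dual_code n C = {v. length v = n \<and> (\<forall>c\<in>C. dot_prod v c = 0)}"

definition hamming_weight :: "'a::zero list \<Rightarrow> nat" where
  "hamming_weight v = length (filter (\<lambda>x. x \<noteq> 0) v)"

definition min_distance :: "nat \<Rightarrow> 'a::zero list set \<Rightarrow> nat" where
  "min_distance n C = Min {hamming_weight v | v. v \<in> C \<and> v \<noteq> replicate n 0}"

end

theory Submission
  imports Defs
begin

text \<open>A vector of the dual code is exactly a linear relation \<open>\<Sum>\<^sub>k v\<^sub>k M\<^sub>k = 0\<close> among the
  representatives, since the coordinate forms span all linear forms. A relation with one
  nonzero coefficient would force a representative to vanish; one with two nonzero
  coefficients would make two representatives proportional, i.e. equal as projective
  points. Conversely, for two distinct columns \<open>b\<^sub>1, b\<^sub>2\<close> the unit matrices \<open>E\<^sub>1\<close>, \<open>E\<^sub>2\<close> at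
  positions \<open>(a, b\<^sub>1)\<close>, \<open>(a, b\<^sub>2)\<close> and their sum have rank one and are three distinct
  projective points satisfying a relation, which gives a dual codeword of weight 3.\<close>

definition lin_comb :: "'a::comm_ring_1 list \<Rightarrow> ('a ^'m::finite ^'l::finite) list \<Rightarrow> 'a ^'m ^'l" where
  "lin_comb v Ms = (\<chi> a b. \<Sum>k<length Ms. v!k * Ms!k$a$b)"

definition unit_matrix :: "'l \<Rightarrow> 'm \<Rightarrow> 'a::zero_neq_one ^'m ^'l" where
  "unit_matrix a b = (\<chi> a' b'. if a' = a \<and> b' = b then 1 else 0)"

lemma dot_prod_conv_sum:
  assumes "length u = length v"
  shows "dot_prod u v = (\<Sum>k<length u. u!k * v!k)"
  using assms unfolding dot_prod_def
  by (simp add: sum_list_sum_nth atLeast0LessThan)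

lemma hamming_weight_eq_card:
  "hamming_weight v = card {k. k < length v \<and> v!k \<noteq> 0}"
  unfolding hamming_weight_def by (simp add: length_filter_conv_card)

lemma lin_comb_eq_0_iff:
  "lin_comb v Ms = 0 \<longleftrightarrow> (\<forall>a b. (\<Sum>k<length Ms. v!k * Ms!k$a$b) = 0)"
  by (simp add: lin_comb_def vec_eq_iff)

lemma lin_form_unit_matrix: "lin_form (unit_matrix a b) M = M$a$b"
proof -
  have "lin_form (unit_matrix a b) M =
      (\<Sum>a'\<in>UNIV. if a' = a then (\<Sum>b'\<in>UNIV. if b' = b then M$a$b else 0) else 0)"
    unfolding lin_form_def unit_matrix_def
    by (intro sum.cong) (auto simp: if_distrib[of "\<lambda>x. x * _"] cong: if_cong)
  then show ?thesis by simp
qed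

lemma lin_form_eq_0_iff: "(\<forall>F. lin_form F M = 0) \<longleftrightarrow> M = 0"
proof
  assume "\<forall>F. lin_form F M = 0"
  then have "M$a$b = 0" for a b
    using lin_form_unit_matrix[of a b M] by simp
  then show "M = 0" by (simp add: vec_eq_iff)
qed (simp add: lin_form_def)

lemma dot_prod_map_lin_form:
  fixes Ms :: "('a::comm_ring_1 ^'m::finite ^'l::finite) list"
  assumes "length v = length Ms"
  shows "dot_prod v (map (lin_form F) Ms) = lin_form F (lin_comb v Ms)"
proof -
  have "dot_prod v (map (lin_form F) Ms) =
      (\<Sum>k<length Ms. \<Sum>a\<in>UNIV. \<Sum>b\<in>UNIV. F$a$b * (v!k * Ms!k$a$b))"
    using assms by (simp add: dot_prod_conv_sum lin_form_def sum_distrib_left algebra_simps)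
  also have "\<dots> = (\<Sum>a\<in>UNIV. \<Sum>b\<in>UNIV. \<Sum>k<length Ms. F$a$b * (v!k * Ms!k$a$b))"
    by (simp add: sum.swap[of _ "{..<length Ms}"] sum.swap[of _ "{..<length Ms}" UNIV])
  also have "\<dots> = lin_form F (lin_comb v Ms)"
    by (simp add: lin_form_def lin_comb_def sum_distrib_left)
  finally show ?thesis .
qed

lemma dual_det_code_iff:
  fixes Ms :: "('a::comm_ring_1 ^'m::finite ^'l::finite) list"
  shows "v \<in> dual_code (length Ms) (det_code Ms) \<longleftrightarrow>
    length v = length Ms \<and> lin_comb v Ms = 0"
proof (cases "length v = length Ms")
  case True
  then have "v \<in> dual_code (length Ms) (det_code Ms) \<longleftrightarrow>
      (\<forall>F. dot_prod v (map (lin_form F) Ms) = 0)"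
    by (auto simp: dual_code_def det_code_def)
  also have "\<dots> \<longleftrightarrow> lin_comb v Ms = 0"
    by (simp add: dot_prod_map_lin_form True lin_form_eq_0_iff)
  finally show ?thesis using True by simp
qed (simp add: dual_code_def)

lemma rank_le_1_if_single_row:
  fixes A :: "'a::field ^'m::finite ^'l::finite"
  assumes "\<And>i. i \<noteq> r \<Longrightarrow> A$i = 0"
  shows "rank A \<le> 1"
proof -
  have "A$i \<in> vec.span {A$r}" for i
    by (cases "i = r") (simp_all add: assms vec.span_base vec.span_zero)
  then have "rows A \<subseteq> vec.span {row r A}"
    by (auto simp: rows_def row_def)
  hence "vec.dim (rows A) \<le> card {row r A}"
    by (intro vec.dim_le_card) auto
  thus ?thesis by (simp add: row_rank_def_gen)
qed

lemma proj_reps_nonzero: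
  assumes "proj_reps t Ms" and "i < length Ms"
  shows "Ms!i \<noteq> 0"
proof -
  have "Ms!i \<in> set Ms" using assms(2) by simp
  with assms(1) show ?thesis by (auto simp: proj_reps_def det_cone_def)
qed

lemma proj_reps_scaled_eq:
  assumes pr: "proj_reps t Ms" and "i < length Ms" and "j < length Ms"
    and "c \<noteq> 0" and "Ms!i = (\<chi> a b. c * Ms!j$a$b)"
  shows "i = j"
proof -
  have "Ms!i \<in> det_cone t" using assms(1,2) by (auto simp: proj_reps_def)
  then have "\<exists>!k. k < length Ms \<and> (\<exists>c. c \<noteq> 0 \<and> Ms!i = (\<chi> a b. c * Ms!k$a$b))"
    using pr by (simp add: proj_reps_def)
  moreover have "\<exists>c. c \<noteq> 0 \<and> Ms!i = (\<chi> a b. c * Ms!i$a$b)"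
    by (auto intro!: exI[of _ 1] simp: vec_eq_iff)
  ultimately show ?thesis using assms by blast
qed

lemma proj_reps_cover:
  assumes "proj_reps t Ms" and "M \<noteq> 0" and "rank M \<le> t"
  obtains i c where "i < length Ms" and "c \<noteq> 0" and "\<And>a b. M$a$b = c * Ms!i$a$b"
proof -
  have "M \<in> det_cone t" using assms(2,3) by (simp add: det_cone_def)
  with assms(1) have "\<exists>i. i < length Ms \<and> (\<exists>c. c \<noteq> 0 \<and> M = (\<chi> a b. c * Ms!i$a$b))"
    unfolding proj_reps_def by (blast dest: ex1_implies_ex)
  with that show thesis by auto
qed

lemma dual_det_code_weight_ge_3:
  fixes Ms :: "('a::field ^'m::finite ^'l::finite) list"
  assumes pr: "proj_reps t Ms" and v: "v \<in> dual_code (length Ms) (det_code Ms)"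
    and nz: "v \<noteq> replicate (length Ms) 0"
  shows "3 \<le> hamming_weight v"
proof -
  define S where "S = {k. k < length Ms \<and> v!k \<noteq> 0}"
  from v have len: "length v = length Ms" and rel: "lin_comb v Ms = 0"
    by (simp_all add: dual_det_code_iff)
  have relS: "(\<Sum>k\<in>S. v!k * Ms!k$a$b) = 0" for a b
  proof -
    have "(\<Sum>k\<in>S. v!k * Ms!k$a$b) = (\<Sum>k<length Ms. v!k * Ms!k$a$b)"
      by (rule sum.mono_neutral_left) (auto simp: S_def)
    with rel show ?thesis by (simp add: lin_comb_eq_0_iff)
  qed
  have "card S \<noteq> 0"
  proof
    assume "card S = 0"
    then have "v = replicate (length Ms) 0"
      using len by (intro nth_equalityI) (auto simp: S_def)
    with nz show False ..
  qed
  moreover have "card S \<noteq> 1"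
  proof
    assume "card S = 1"
    then obtain i where S: "S = {i}" by (auto simp: card_Suc_eq)
    hence "i < length Ms" "v!i \<noteq> 0" by (auto simp: S_def)
    moreover have "Ms!i = 0"
      using relS S \<open>v!i \<noteq> 0\<close> by (simp add: vec_eq_iff)
    ultimately show False using proj_reps_nonzero[OF pr] by blast
  qed
  moreover have "card S \<noteq> 2"
  proof
    assume "card S = 2"
    then obtain i j where S: "S = {i, j}" and "i \<noteq> j" by (auto simp: card_2_iff)
    hence i: "i < length Ms" "v!i \<noteq> 0" and j: "j < length Ms" "v!j \<noteq> 0"
      by (auto simp: S_def)
    have "Ms!i$a$b = (- v!j / v!i) * Ms!j$a$b" for a b
    proof -
      have "v!i * Ms!i$a$b + v!j * Ms!j$a$b = 0"
        using relS[of a b] S \<open>i \<noteq> j\<close> by simp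
      with i(2) show ?thesis
        by (simp add: field_simps eq_neg_iff_add_eq_0)
    qed
    then have "Ms!i = (\<chi> a b. (- v!j / v!i) * Ms!j$a$b)"
      by (simp add: vec_eq_iff)
    from proj_reps_scaled_eq[OF pr i(1) j(1) _ this] i(2) j(2) have "i = j" by simp
    with \<open>i \<noteq> j\<close> show False ..
  qed
  ultimately have "3 \<le> card S" by linarith
  thus ?thesis using len by (simp add: hamming_weight_eq_card S_def)
qed

lemma sum_delta_mult:
  fixes c :: "'a::comm_ring_1" and n :: nat
  shows "(\<Sum>k<n. (if k = i then c else 0) * f k) = (if i < n then c * f i else 0)"
proof -
  have "(\<Sum>k<n. (if k = i then c else 0) * f k) = (\<Sum>k<n. if k = i then c * f i else 0)"
    by (rule sum.cong) auto
  also have "\<dots> = (if i \<in> {..<n} then c * f i else 0)"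
    by (rule sum.delta) simp
  finally show ?thesis by simp
qed

lemma dual_det_code_weight_3_exists:
  fixes Ms :: "('a::field ^'m::finite ^'l::finite) list"
  assumes pr: "proj_reps t Ms" and "1 \<le> t" and "2 \<le> CARD('m)"
  shows "\<exists>v. v \<in> dual_code (length Ms) (det_code Ms) \<and> hamming_weight v = 3"
proof -
  obtain b1 b2 :: 'm where "b1 \<noteq> b2"
    using assms(3) by (metis card_2_iff' ex_card)
  fix a0 :: 'l
  define A :: "'a ^'m ^'l" where "A = unit_matrix a0 b1"
  define B :: "'a ^'m ^'l" where "B = unit_matrix a0 b2"
  have entries: "A$a0$b1 = 1" "A$a0$b2 = 0" "B$a0$b1 = 0" "B$a0$b2 = 1"
    using \<open>b1 \<noteq> b2\<close> by (auto simp: A_def B_def unit_matrix_def)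
  have point: "M \<noteq> 0 \<and> rank M \<le> t" if "M \<in> {A, B, A + B}" for M
  proof
    have "M$a0$b1 \<noteq> 0 \<or> M$a0$b2 \<noteq> 0" using that entries by auto
    then show "M \<noteq> 0" by auto
    have "rank M \<le> 1" using that
      by (intro rank_le_1_if_single_row[where r = a0]) (auto simp: A_def B_def unit_matrix_def vec_eq_iff)
    with \<open>1 \<le> t\<close> show "rank M \<le> t" by simp
  qed
  obtain iA cA where iA: "iA < length Ms" "cA \<noteq> 0" "\<And>a b. A$a$b = cA * Ms!iA$a$b"
    using point[of A] by (auto elim: proj_reps_cover[OF pr])
  obtain iB cB where iB: "iB < length Ms" "cB \<noteq> 0" "\<And>a b. B$a$b = cB * Ms!iB$a$b"
    using point[of B] by (auto elim: proj_reps_cover[OF pr])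
  obtain iC cC where iC: "iC < length Ms" "cC \<noteq> 0" "\<And>a b. (A + B)$a$b = cC * Ms!iC$a$b"
    using point[of "A + B"] by (auto elim: proj_reps_cover[OF pr])
  text \<open>The three matrices have different zero patterns in row \<open>a0\<close>, so they are
    different projective points.\<close>
  have distinct: "iA \<noteq> iB" "iA \<noteq> iC" "iB \<noteq> iC"
    using iA(2) iB(2) entries iA(3)[of a0 b1] iB(3)[of a0 b1] iC(3)[of a0 b1]
      iA(3)[of a0 b2] iC(3)[of a0 b2] by auto
  define g where "g k = (if k = iA then cA else 0) + (if k = iB then cB else 0)
      + (if k = iC then - cC else 0)" for k
  define v where "v = map g [0..<length Ms]"
  have "lin_comb v Ms = A + B - (A + B)"
    using iA iB iC
    by (simp add: lin_comb_def v_def g_def vec_eq_iff distrib_right sum.distrib sum_delta_mult)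
  hence "v \<in> dual_code (length Ms) (det_code Ms)"
    by (simp add: dual_det_code_iff v_def)
  moreover have "{k. k < length v \<and> v!k \<noteq> 0} = {iA, iB, iC}"
    using iA iB iC distinct by (auto simp: v_def g_def split: if_splits)
  hence "hamming_weight v = 3" using distinct by (simp add: hamming_weight_eq_card)
  ultimately show ?thesis by blast
qed

lemma min_distance_eqI:
  assumes "\<And>v. v \<in> C \<Longrightarrow> length v = n"
    and "\<And>v. v \<in> C \<Longrightarrow> v \<noteq> replicate n 0 \<Longrightarrow> d \<le> hamming_weight v"
    and "v \<in> C" and "hamming_weight v = d" and "0 < d"
  shows "min_distance n C = d"
  unfolding min_distance_def
proof (rule Min_eqI)
  show "finite {hamming_weight v |v. v \<in> C \<and> v \<noteq> replicate n 0}"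
    by (rule finite_subset[of _ "{..n}"])
      (auto simp: hamming_weight_def assms(1) intro: order_trans[OF length_filter_le])
  have "v \<noteq> replicate n 0" using assms(4,5) by (auto simp: hamming_weight_def)
  then show "d \<in> {hamming_weight v |v. v \<in> C \<and> v \<noteq> replicate n 0}"
    using assms(3,4) by blast
qed (use assms(2) in blast)

theorem mainTheorem11:
  fixes t :: nat
    and Ms :: "('a::{field,finite} ^'m::finite ^'l::finite) list"
  assumes "1 \<le> t" and "t \<le> CARD('l)" and "CARD('l) \<le> CARD('m)"
    and "CARD('l) * CARD('m) \<ge> 2"
    and "proj_reps t Ms"
  shows "min_distance (length Ms) (dual_code (length Ms) (det_code Ms)) = 3"
proof -
  have "2 \<le> CARD('m)"
  proof (rule ccontr)
    assume "\<not> 2 \<le> CARD('m)"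
    with assms(3) have "CARD('l) * CARD('m) \<le> 1 * 1"
      by (intro mult_le_mono) auto
    with assms(4) show False by simp
  qed
  then obtain v where "v \<in> dual_code (length Ms) (det_code Ms)" "hamming_weight v = 3"
    using dual_det_code_weight_3_exists[OF assms(5,1)] by blast
  then show ?thesis
    by (intro min_distance_eqI dual_det_code_weight_ge_3[OF assms(5)])
      (auto simp: dual_code_def)
qed

end
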